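(* Let $\mathfrak{C}$ be a class of languages closed under finite union, inverse gsm-mappings and intersection with regular languages (for example, the class of context-free languages). Let $S=\mathcal{S}[Y;S_\alpha;\phi_{\alpha,\beta}]$ be a strong semilattice of semigroups. Then $S$ is $U(\mathfrak{C})$ if and only if $S$ is finitely generated and every $S_\alpha$ ($\alpha\in Y$) is $U(\mathfrak{C})$.
   Context: For a semigroup $S$ generated by a finite set $A$, $\mathrm{WP}(S,A)=\{u\#v^{\mathrm{rev}} : u,v\in A^+,\ u=_S v\}$, where $\#\notin A$ and $v^{\mathrm{rev}}$ is the reversal of $v$. For a class of languages $\mathfrak{C}$, a semigroup is $U(\mathfrak{C})$ if it is finitely generated and its word problem with respect to some (equivalently any) finite generating set lies in $\mathfrak{C}$. Strong semilattice: $Y$ is a (meet) semilattice; for each $\alpha\in Y$, $S_\alpha$ is a semigroup; for $\alpha\ge\beta$, $\phi_{\alpha,\beta}:S_\alpha\to S_\beta$ is a homomorphism with $\phi_{\alpha,\alpha}$ the identity and $\phi_{\alpha,\beta}\phi_{\beta,\gamma}=\phi_{\alpha,\gamma}$ whenever $\alpha\ge\beta\ge\gamma$ (maps written on the right). $\mathcal{S}[Y;S_\alpha;\phi_{\alpha,\beta}]$ is the disjoint union $\bigcup_{\alpha\in Y}S_\alpha$ with product $xy=(x\phi_{\alpha,\alpha\wedge\beta})(y\phi_{\beta,\alpha\wedge\beta})$ for $x\in S_\alpha$, $y\in S_\beta$. *)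

theory Defs
  imports Main
begin

definition semigroup_on :: "'s set \<Rightarrow> ('s \<Rightarrow> 's \<Rightarrow> 's) \<Rightarrow> bool" where
  "semigroup_on S m \<longleftrightarrow>
     (\<forall>x\<in>S. \<forall>y\<in>S. m x y \<in> S) \<and>
     (\<forall>x\<in>S. \<forall>y\<in>S. \<forall>z\<in>S. m (m x y) z = m x (m y z))"

definition sgp_gen :: "'s set \<Rightarrow> ('s \<Rightarrow> 's \<Rightarrow> 's) \<Rightarrow> 's set \<Rightarrow> 's set" where
  "sgp_gen S m X = \<Inter>{T. X \<subseteq> T \<and> T \<subseteq> S \<and> (\<forall>x\<in>T. \<forall>y\<in>T. m x y \<in> T)}"

definition fin_gen :: "'s set \<Rightarrow> ('s \<Rightarrow> 's \<Rightarrow> 's) \<Rightarrow> bool" where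
  "fin_gen S m \<longleftrightarrow> (\<exists>X. finite X \<and> X \<subseteq> S \<and> sgp_gen S m X = S)"

fun word_val :: "('s \<Rightarrow> 's \<Rightarrow> 's) \<Rightarrow> (nat \<Rightarrow> 's) \<Rightarrow> nat list \<Rightarrow> 's" where
  "word_val m e [] = undefined"
| "word_val m e [a] = e a"
| "word_val m e (a # b # w) = m (e a) (word_val m e (b # w))"

text \<open>Word problem WP(S,A) with respect to the finite alphabet A (mapped injectively onto a
  generating set via e) and the separator letter h (playing the role of #, not in A).\<close>
definition word_problem :: "('s \<Rightarrow> 's \<Rightarrow> 's) \<Rightarrow> nat set \<Rightarrow> (nat \<Rightarrow> 's) \<Rightarrow> nat \<Rightarrow> nat list set" where
  "word_problem m A e h =
     {u @ [h] @ rev v | u v. u \<noteq> [] \<and> v \<noteq> [] \<and> set u \<subseteq> A \<and> set v \<subseteq> A \<and>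
                            word_val m e u = word_val m e v}"

definition regular_lang :: "nat list set \<Rightarrow> bool" where
  "regular_lang R \<longleftrightarrow>
     (\<exists>(\<Sigma>::nat set) (Q::nat set) (\<delta>::nat \<Rightarrow> nat \<Rightarrow> nat) q0 F.
        finite \<Sigma> \<and> finite Q \<and> q0 \<in> Q \<and> F \<subseteq> Q \<and>
        (\<forall>q\<in>Q. \<forall>a\<in>\<Sigma>. \<delta> q a \<in> Q) \<and>
        R = {w. set w \<subseteq> \<Sigma> \<and> foldl \<delta> q0 w \<in> F})"

text \<open>A (nondeterministic) generalized sequential machine (Hopcroft--Ullman):
  states Q, input alphabet Sigma, output alphabet Delta, transition/output relation delta,
  initial state q0, final states F.\<close>
definition is_gsm :: "nat set \<Rightarrow> nat set \<Rightarrow> nat set \<Rightarrow>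
    (nat \<Rightarrow> nat \<Rightarrow> (nat \<times> nat list) set) \<Rightarrow> nat \<Rightarrow> nat set \<Rightarrow> bool" where
  "is_gsm Q \<Sigma> \<Delta> \<delta> q0 F \<longleftrightarrow>
     finite Q \<and> finite \<Sigma> \<and> finite \<Delta> \<and> q0 \<in> Q \<and> F \<subseteq> Q \<and>
     (\<forall>q\<in>Q. \<forall>a\<in>\<Sigma>. finite (\<delta> q a) \<and> \<delta> q a \<subseteq> Q \<times> lists \<Delta>)"

inductive gsm_run :: "(nat \<Rightarrow> nat \<Rightarrow> (nat \<times> nat list) set) \<Rightarrow> nat \<Rightarrow> nat list \<Rightarrow> nat \<Rightarrow> nat list \<Rightarrow> bool"
  for \<delta> where
  run_nil: "gsm_run \<delta> q [] q []"
| run_cons: "(p, z) \<in> \<delta> q a \<Longrightarrow> gsm_run \<delta> p w q' y \<Longrightarrow> gsm_run \<delta> q (a # w) q' (z @ y)"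

definition gsm_inverse :: "nat set \<Rightarrow> (nat \<Rightarrow> nat \<Rightarrow> (nat \<times> nat list) set) \<Rightarrow> nat \<Rightarrow> nat set \<Rightarrow>
    nat list set \<Rightarrow> nat list set" where
  "gsm_inverse \<Sigma> \<delta> q0 F L =
     {x. set x \<subseteq> \<Sigma> \<and> (\<exists>q' y. q' \<in> F \<and> gsm_run \<delta> q0 x q' y \<and> y \<in> L)}"

definition closed_finite_union :: "nat list set set \<Rightarrow> bool" where
  "closed_finite_union Cl \<longleftrightarrow> (\<forall>L1\<in>Cl. \<forall>L2\<in>Cl. L1 \<union> L2 \<in> Cl)"

definition closed_inter_regular :: "nat list set set \<Rightarrow> bool" where
  "closed_inter_regular Cl \<longleftrightarrow> (\<forall>L\<in>Cl. \<forall>R. regular_lang R \<longrightarrow> L \<inter> R \<in> Cl)"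

definition closed_inverse_gsm :: "nat list set set \<Rightarrow> bool" where
  "closed_inverse_gsm Cl \<longleftrightarrow>
     (\<forall>L\<in>Cl. \<forall>Q \<Sigma> \<Delta> \<delta> q0 F. is_gsm Q \<Sigma> \<Delta> \<delta> q0 F \<longrightarrow> gsm_inverse \<Sigma> \<delta> q0 F L \<in> Cl)"

definition U_class :: "nat list set set \<Rightarrow> 's set \<Rightarrow> ('s \<Rightarrow> 's \<Rightarrow> 's) \<Rightarrow> bool" where
  "U_class Cl S m \<longleftrightarrow> semigroup_on S m \<and>
     (\<exists>(A::nat set) (e::nat \<Rightarrow> 's) (h::nat).
        finite A \<and> h \<notin> A \<and> inj_on e A \<and> e ` A \<subseteq> S \<and> sgp_gen S m (e ` A) = S \<and>
        word_problem m A e h \<in> Cl)"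

text \<open>Y is the whole (meet-)semilattice type 'y; component S_alpha has carrier Cs alpha and
  multiplication M alpha; phi alpha beta is the structure map (used for beta <= alpha).\<close>
definition strong_semilattice ::
    "('y::semilattice_inf \<Rightarrow> 'a set) \<Rightarrow> ('y \<Rightarrow> 'a \<Rightarrow> 'a \<Rightarrow> 'a) \<Rightarrow> ('y \<Rightarrow> 'y \<Rightarrow> 'a \<Rightarrow> 'a) \<Rightarrow> bool" where
  "strong_semilattice Cs M phi \<longleftrightarrow>
     (\<forall>\<alpha>. Cs \<alpha> \<noteq> {} \<and> semigroup_on (Cs \<alpha>) (M \<alpha>)) \<and>
     (\<forall>\<alpha> \<beta>. \<beta> \<le> \<alpha> \<longrightarrow>
        (\<forall>x\<in>Cs \<alpha>. phi \<alpha> \<beta> x \<in> Cs \<beta>) \<and>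
        (\<forall>x\<in>Cs \<alpha>. \<forall>y\<in>Cs \<alpha>. phi \<alpha> \<beta> (M \<alpha> x y) = M \<beta> (phi \<alpha> \<beta> x) (phi \<alpha> \<beta> y))) \<and>
     (\<forall>\<alpha>. \<forall>x\<in>Cs \<alpha>. phi \<alpha> \<alpha> x = x) \<and>
     (\<forall>\<alpha> \<beta> \<gamma>. \<beta> \<le> \<alpha> \<and> \<gamma> \<le> \<beta> \<longrightarrow> (\<forall>x\<in>Cs \<alpha>. phi \<beta> \<gamma> (phi \<alpha> \<beta> x) = phi \<alpha> \<gamma> x))"

definition ssl_carrier :: "('y \<Rightarrow> 'a set) \<Rightarrow> ('y \<times> 'a) set" where
  "ssl_carrier Cs = Sigma UNIV Cs"

definition ssl_mult ::
    "('y::semilattice_inf \<Rightarrow> 'a \<Rightarrow> 'a \<Rightarrow> 'a) \<Rightarrow> ('y \<Rightarrow> 'y \<Rightarrow> 'a \<Rightarrow> 'a) \<Rightarrow> 'y \<times> 'a \<Rightarrow> 'y \<times> 'a \<Rightarrow> 'y \<times> 'a" where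
  "ssl_mult M phi p q =
     (let \<alpha> = fst p; \<beta> = fst q; \<gamma> = inf \<alpha> \<beta>
      in (\<gamma>, M \<gamma> (phi \<alpha> \<gamma> (snd p)) (phi \<beta> \<gamma> (snd q))))"

end

theory Submission
  imports Defs
begin

text \<open>Every element of S is a product of generators, and the level (the component) of a product
  is the meet of the levels of its factors. Projecting a finite generating set of S into a
  component \<open>S\<^sub>\<alpha>\<close> with the structure maps gives a generating set of \<open>S\<^sub>\<alpha>\<close>; rewriting each new
  generator as a word in the old ones is a gsm substitution, so the word problem of \<open>S\<^sub>\<alpha>\<close> is
  an inverse gsm image of that of S. Conversely, if S is finitely generated then Y is finite,
  since every level is the meet of a set of generator levels. Two words are equal in S iff they
  have the same level \<open>\<alpha>\<close> and their projections are equal in \<open>S\<^sub>\<alpha>\<close>; a word has level \<open>\<alpha>\<close> iff all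
  its letters lie above \<open>\<alpha>\<close> and, for every \<open>\<beta> > \<alpha>\<close>, some letter does not lie above \<open>\<beta>\<close>.
  Hence WP(S) is the finite union over \<open>\<alpha>\<close> of the word problems of the \<open>S\<^sub>\<alpha>\<close> (with respect to
  the projected generators) intersected with finitely many regular languages.\<close>

lemma word_val_Cons: "w \<noteq> [] \<Longrightarrow> word_val m e (a # w) = m (e a) (word_val m e w)"
  by (cases w) auto

lemma word_val_cong: "\<forall>a\<in>set u. e a = e' a \<Longrightarrow> word_val m e u = word_val m e' u"
  by (induction m e u rule: word_val.induct) auto

lemma word_val_closed:
  assumes "\<forall>x\<in>T. \<forall>y\<in>T. m x y \<in> T" "u \<noteq> []" "e ` set u \<subseteq> T"
  shows "word_val m e u \<in> T"
  using assms(2,3)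
  by (induction u rule: list_nonempty_induct) (use assms(1) in \<open>auto simp: word_val_Cons\<close>)

lemma word_val_hom:
  assumes hom: "\<forall>x\<in>T. \<forall>y\<in>T. m x y \<in> T \<and> \<psi> (m x y) = m' (\<psi> x) (\<psi> y)"
    and "u \<noteq> []" "e ` set u \<subseteq> T"
  shows "\<psi> (word_val m e u) = word_val m' (\<lambda>a. \<psi> (e a)) u"
  using assms(2,3)
proof (induction u rule: list_nonempty_induct)
  case (cons a w)
  have "word_val m e w \<in> T"
    using word_val_closed[of T m w e] hom cons.prems cons.hyps by auto
  then show ?case using cons hom by (auto simp: word_val_Cons)
qed simp

lemma word_val_append:
  assumes "semigroup_on S m" "u \<noteq> []" "v \<noteq> []" "e ` set (u @ v) \<subseteq> S"
  shows "word_val m e (u @ v) = m (word_val m e u) (word_val m e v)"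
  using assms(2,4)
proof (induction u rule: list_nonempty_induct)
  case (cons a w)
  have closed: "\<forall>x\<in>S. \<forall>y\<in>S. m x y \<in> S" using assms(1) by (simp add: semigroup_on_def)
  have "e a \<in> S" "word_val m e w \<in> S" "word_val m e v \<in> S"
    using cons.prems word_val_closed[OF closed, of w e] word_val_closed[OF closed, of v e] cons.hyps assms(3)
    by auto
  then show ?case
    using cons assms(1,3) by (simp add: word_val_Cons semigroup_on_def)
qed (simp add: word_val_Cons assms(3))

lemma word_val_concat:
  assumes "semigroup_on S m" "u \<noteq> []" "\<forall>a\<in>set u. z a \<noteq> [] \<and> e ` set (z a) \<subseteq> S"
  shows "word_val m e (concat (map z u)) = word_val m (\<lambda>a. word_val m e (z a)) u"
  using assms(2,3)
proof (induction u rule: list_nonempty_induct)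
  case (cons a w)
  then have "concat (map z w) \<noteq> []" by (cases w) auto
  moreover have "e ` set (z a @ concat (map z w)) \<subseteq> S" using cons.prems by fastforce
  ultimately show ?case
    using cons word_val_append[OF assms(1), of "z a" "concat (map z w)" e]
    by (auto simp: word_val_Cons)
qed simp

lemma word_val_inf:
  fixes g :: "nat \<Rightarrow> 'y::semilattice_inf"
  shows "u \<noteq> [] \<Longrightarrow> word_val inf g u = Inf_fin (g ` set u)"
  by (induction u rule: list_nonempty_induct) (auto simp: word_val_Cons)

lemma sgp_gen_eq_word_vals:
  assumes "semigroup_on S m" "e ` A \<subseteq> S"
  shows "sgp_gen S m (e ` A) = {word_val m e w | w. w \<noteq> [] \<and> set w \<subseteq> A}" (is "_ = ?W")
proof
  have closed: "\<forall>x\<in>S. \<forall>y\<in>S. m x y \<in> S" using assms(1) by (simp add: semigroup_on_def)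
  have "e a \<in> ?W" if "a \<in> A" for a
    using that by (intro CollectI exI[of _ "[a]"]) simp
  then have gens: "e ` A \<subseteq> ?W" by blast
  have sub: "?W \<subseteq> S"
  proof
    fix x assume "x \<in> ?W"
    then obtain w where "x = word_val m e w" "w \<noteq> []" "set w \<subseteq> A" by blast
    then show "x \<in> S" using word_val_closed[OF closed, of w e] assms(2) by blast
  qed
  have mult: "m x y \<in> ?W" if xy: "x \<in> ?W" "y \<in> ?W" for x y
  proof -
    obtain u v where "x = word_val m e u" "y = word_val m e v" "u \<noteq> []" "v \<noteq> []"
      "set u \<subseteq> A" "set v \<subseteq> A"
      using xy by blast
    moreover have "e ` set (u @ v) \<subseteq> S" using calculation assms(2) by auto
    ultimately show ?thesis
      using word_val_append[OF assms(1), of u v e] by (intro CollectI exI[of _ "u @ v"]) simp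
  qed
  have "?W \<in> {T. e ` A \<subseteq> T \<and> T \<subseteq> S \<and> (\<forall>x\<in>T. \<forall>y\<in>T. m x y \<in> T)}"
  proof (rule CollectI, intro conjI ballI)
    fix x y assume "x \<in> ?W" "y \<in> ?W"
    then show "m x y \<in> ?W" by (rule mult)
  qed (fact gens sub)+
  then show "sgp_gen S m (e ` A) \<subseteq> ?W" unfolding sgp_gen_def by (rule Inter_lower)
next
  show "?W \<subseteq> sgp_gen S m (e ` A)"
  proof (unfold sgp_gen_def, intro subsetI InterI)
    fix x T assume "x \<in> ?W" and T: "T \<in> {T. e ` A \<subseteq> T \<and> T \<subseteq> S \<and> (\<forall>x\<in>T. \<forall>y\<in>T. m x y \<in> T)}"
    then obtain w where "x = word_val m e w" "w \<noteq> []" "set w \<subseteq> A" by blast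
    then show "x \<in> T" using word_val_closed[of T m w e] T by blast
  qed
qed

lemma generated_word_exists:
  assumes "semigroup_on S m" "e ` A \<subseteq> S" "sgp_gen S m (e ` A) = S" "x \<in> S"
  shows "\<exists>w. w \<noteq> [] \<and> set w \<subseteq> A \<and> word_val m e w = x"
proof -
  have "x \<in> {word_val m e w | w. w \<noteq> [] \<and> set w \<subseteq> A}"
    using assms(3,4) sgp_gen_eq_word_vals[OF assms(1,2)] by simp
  then show ?thesis by auto
qed

lemma word_problem_eqI:
  assumes "\<And>u v. u \<noteq> [] \<Longrightarrow> v \<noteq> [] \<Longrightarrow> set u \<subseteq> A \<Longrightarrow> set v \<subseteq> A \<Longrightarrow>
    word_val m e u = word_val m e v \<longleftrightarrow> word_val m' e' u = word_val m' e' v"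
  shows "word_problem m A e h = word_problem m' A e' h"
  unfolding word_problem_def using assms by (intro Collect_cong ex_cong1) auto

lemma word_problem_cong:
  "\<forall>a\<in>A. e a = e' a \<Longrightarrow> word_problem m A e h = word_problem m A e' h"
  by (rule word_problem_eqI) (metis subsetD word_val_cong)

lemma word_problem_inj_hom:
  assumes hom: "\<forall>x\<in>T. \<forall>y\<in>T. m x y \<in> T \<and> \<psi> (m x y) = m' (\<psi> x) (\<psi> y)"
    and "inj_on \<psi> T" "e ` A \<subseteq> T"
  shows "word_problem m' A (\<lambda>a. \<psi> (e a)) h = word_problem m A e h"
proof (rule word_problem_eqI)
  have closed: "\<forall>x\<in>T. \<forall>y\<in>T. m x y \<in> T" using hom by blast
  have val: "word_val m' (\<lambda>a. \<psi> (e a)) u = \<psi> (word_val m e u)" "word_val m e u \<in> T"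
    if "u \<noteq> []" "set u \<subseteq> A" for u
  proof -
    have "e ` set u \<subseteq> T" using that(2) assms(3) by blast
    then show "word_val m' (\<lambda>a. \<psi> (e a)) u = \<psi> (word_val m e u)" "word_val m e u \<in> T"
      using word_val_hom[OF hom that(1)] word_val_closed[OF closed that(1)] by auto
  qed
  fix u v assume "u \<noteq> []" "v \<noteq> []" "set u \<subseteq> A" "set v \<subseteq> A"
  then show "word_val m' (\<lambda>a. \<psi> (e a)) u = word_val m' (\<lambda>a. \<psi> (e a)) v \<longleftrightarrow>
      word_val m e u = word_val m e v"
    using val inj_on_eq_iff[OF assms(2), of "word_val m e u" "word_val m e v"] by metis
qed

lemma word_problem_mem_iff:
  assumes "h \<notin> set u" "h \<notin> set v"
  shows "u @ [h] @ rev v \<in> word_problem m A e h \<longleftrightarrow>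
    u \<noteq> [] \<and> v \<noteq> [] \<and> set u \<subseteq> A \<and> set v \<subseteq> A \<and> word_val m e u = word_val m e v"
proof
  assume "u @ [h] @ rev v \<in> word_problem m A e h"
  then obtain u' v' where split: "u @ h # rev v = u' @ h # rev v'" and
    "u' \<noteq> []" "v' \<noteq> []" "set u' \<subseteq> A" "set v' \<subseteq> A" "word_val m e u' = word_val m e v'"
    unfolding word_problem_def by auto
  moreover have "u = u' \<and> rev v = rev v'"
    using split append_Cons_eq_iff[of h u "rev v" u' "rev v'"] assms by (metis set_rev)
  ultimately show "u \<noteq> [] \<and> v \<noteq> [] \<and> set u \<subseteq> A \<and> set v \<subseteq> A \<and> word_val m e u = word_val m e v"
    by simp
next
  assume "u \<noteq> [] \<and> v \<noteq> [] \<and> set u \<subseteq> A \<and> set v \<subseteq> A \<and> word_val m e u = word_val m e v"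
  then show "u @ [h] @ rev v \<in> word_problem m A e h"
    unfolding word_problem_def by blast
qed

lemma closed_finite_union_UN:
  assumes "closed_finite_union Cl" "finite I" "I \<noteq> {}" "\<forall>i\<in>I. L i \<in> Cl"
  shows "(\<Union>i\<in>I. L i) \<in> Cl"
  using assms(2-4)
proof (induction I rule: finite_ne_induct)
  case (insert i I)
  then show ?case using assms(1) by (simp add: closed_finite_union_def)
qed simp

lemma closed_inter_regular_INT:
  assumes "closed_inter_regular Cl" "finite I" "L \<in> Cl" "\<forall>i\<in>I. regular_lang (R i)"
  shows "L \<inter> (\<Inter>i\<in>I. R i) \<in> Cl"
  using assms(2,4)
proof (induction I rule: finite_induct)
  case (insert i I)
  then have "(L \<inter> (\<Inter>i\<in>I. R i)) \<inter> R i \<in> Cl"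
    using assms(1) by (simp add: closed_inter_regular_def)
  then show ?case by (simp add: Int_ac)
qed (simp add: assms(3))

definition both_sides_meet :: "nat set \<Rightarrow> nat \<Rightarrow> nat set \<Rightarrow> nat list set" where
  "both_sides_meet A h Q =
     {u @ [h] @ v | u v. set u \<subseteq> A \<and> set v \<subseteq> A \<and> set u \<inter> Q \<noteq> {} \<and> set v \<inter> Q \<noteq> {}}"

text \<open>States 0 and 1 lie before the separator h, states 2 and 3 after it; the odd states
  record that a letter of Q has been read on the current side. State 4 is a sink.\<close>
definition meet_dfa :: "nat set \<Rightarrow> nat \<Rightarrow> nat \<Rightarrow> nat \<Rightarrow> nat" where
  "meet_dfa Q h q a =
     (if a = h then (if q = 1 then 2 else 4)
      else if q \<le> 1 then (if q = 1 \<or> a \<in> Q then 1 else 0)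
      else if q \<le> 3 then (if q = 3 \<or> a \<in> Q then 3 else 2)
      else 4)"

lemma meet_dfa_sink: "foldl (meet_dfa Q h) 4 w = 4"
  by (induction w) (simp_all add: meet_dfa_def)

lemma meet_dfa_left:
  "h \<notin> set u \<Longrightarrow> q \<le> 1 \<Longrightarrow>
    foldl (meet_dfa Q h) q u = (if q = 1 \<or> set u \<inter> Q \<noteq> {} then 1 else 0)"
  by (induction u arbitrary: q) (auto simp: meet_dfa_def)

lemma meet_dfa_right:
  "h \<notin> set v \<Longrightarrow> q \<in> {2, 3} \<Longrightarrow>
    foldl (meet_dfa Q h) q v = (if q = 3 \<or> set v \<inter> Q \<noteq> {} then 3 else 2)"
proof (induction v arbitrary: q)
  case (Cons a v)
  have "meet_dfa Q h q a = (if q = 3 \<or> a \<in> Q then 3 else 2)"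
    using Cons.prems by (auto simp: meet_dfa_def)
  then show ?case using Cons.IH[of "if q = 3 \<or> a \<in> Q then 3 else 2"] Cons.prems by auto
qed auto

lemma meet_dfa_accepts_iff:
  "foldl (meet_dfa Q h) 0 w = 3 \<longleftrightarrow>
    (\<exists>u v. w = u @ [h] @ v \<and> h \<notin> set u \<and> h \<notin> set v \<and> set u \<inter> Q \<noteq> {} \<and> set v \<inter> Q \<noteq> {})"
proof
  let ?run = "foldl (meet_dfa Q h)"
  assume acc: "?run 0 w = 3"
  have "h \<in> set w"
    using acc meet_dfa_left[of h w 0 Q] by (cases "h \<in> set w") (simp_all split: if_splits)
  then obtain u v where w: "w = u @ h # v" "h \<notin> set u" by (blast dest: split_list_first)
  have u: "set u \<inter> Q \<noteq> {}"
  proof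
    assume "set u \<inter> Q = {}"
    then have "?run 0 (u @ [h]) = 4" using meet_dfa_left[OF w(2), of 0 Q] by (simp add: meet_dfa_def)
    then show False using acc w(1) meet_dfa_sink[of Q h v] by simp
  qed
  then have after: "?run 0 (u @ [h]) = 2"
    using meet_dfa_left[OF w(2), of 0 Q] by (simp add: meet_dfa_def)
  have v: "h \<notin> set v"
  proof
    assume "h \<in> set v"
    then obtain v1 v2 where v: "v = v1 @ h # v2" "h \<notin> set v1" by (blast dest: split_list_first)
    have "?run 0 (u @ [h] @ v1 @ [h]) = 4"
      using after meet_dfa_right[OF v(2), of 2 Q] by (simp add: meet_dfa_def)
    then show False using acc w(1) v(1) meet_dfa_sink[of Q h v2] by simp
  qed
  then have "set v \<inter> Q \<noteq> {}"
    using acc after w(1) meet_dfa_right[OF v, of 2 Q] by (simp split: if_splits)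
  then show "\<exists>u v. w = u @ [h] @ v \<and> h \<notin> set u \<and> h \<notin> set v \<and> set u \<inter> Q \<noteq> {} \<and> set v \<inter> Q \<noteq> {}"
    using w u v by auto
next
  assume "\<exists>u v. w = u @ [h] @ v \<and> h \<notin> set u \<and> h \<notin> set v \<and> set u \<inter> Q \<noteq> {} \<and> set v \<inter> Q \<noteq> {}"
  then obtain u v where "w = u @ [h] @ v" "h \<notin> set u" "h \<notin> set v" "set u \<inter> Q \<noteq> {}" "set v \<inter> Q \<noteq> {}"
    by blast
  then show "foldl (meet_dfa Q h) 0 w = 3"
    using meet_dfa_left[of h u 0 Q] meet_dfa_right[of h v 2 Q] by (simp add: meet_dfa_def)
qed

lemma both_sides_meet_dfa:
  assumes "h \<notin> A"
  shows "both_sides_meet A h Q = {w. set w \<subseteq> insert h A \<and> foldl (meet_dfa Q h) 0 w \<in> {3}}"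
proof (intro set_eqI iffI)
  fix w assume "w \<in> both_sides_meet A h Q"
  then obtain u v where uv: "w = u @ [h] @ v" "set u \<subseteq> A" "set v \<subseteq> A" "set u \<inter> Q \<noteq> {}" "set v \<inter> Q \<noteq> {}"
    unfolding both_sides_meet_def by blast
  then have "foldl (meet_dfa Q h) 0 w = 3"
    using assms meet_dfa_accepts_iff[of Q h w] by blast
  then show "w \<in> {w. set w \<subseteq> insert h A \<and> foldl (meet_dfa Q h) 0 w \<in> {3}}" using uv by auto
next
  fix w assume w: "w \<in> {w. set w \<subseteq> insert h A \<and> foldl (meet_dfa Q h) 0 w \<in> {3}}"
  then obtain u v where uv: "w = u @ [h] @ v" "h \<notin> set u" "h \<notin> set v" "set u \<inter> Q \<noteq> {}" "set v \<inter> Q \<noteq> {}"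
    using meet_dfa_accepts_iff[of Q h w] by auto
  moreover have "set u \<subseteq> A" "set v \<subseteq> A" using w uv(1-3) by auto
  ultimately show "w \<in> both_sides_meet A h Q" unfolding both_sides_meet_def by blast
qed

lemma regular_both_sides_meet:
  assumes "finite A" "h \<notin> A"
  shows "regular_lang (both_sides_meet A h Q)"
  unfolding regular_lang_def both_sides_meet_dfa[OF assms(2)]
  by (rule exI[of _ "insert h A"], rule exI[of _ "{0..4}"], rule exI[of _ "meet_dfa Q h"],
      rule exI[of _ 0], rule exI[of _ "{3}"]) (simp add: assms(1) meet_dfa_def)

lemma both_sides_meet_mem_iff:
  assumes "h \<notin> set u" "h \<notin> set v"
  shows "u @ [h] @ v \<in> both_sides_meet A h Q \<longleftrightarrow>
    set u \<subseteq> A \<and> set v \<subseteq> A \<and> set u \<inter> Q \<noteq> {} \<and> set v \<inter> Q \<noteq> {}"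
  using assms append_Cons_eq_iff[of h u v] unfolding both_sides_meet_def by auto

text \<open>State 0 is initial, 1 reads the left factor, 2 has just read the separator and 3 reads
  the right factor. Since the right factor is stored reversed, its letters are replaced by
  reversed images; thus \<open>u @ [h] @ rev v\<close> is mapped to
  \<open>concat (map z u) @ [h'] @ rev (concat (map z v))\<close>.\<close>
definition subst_gsm :: "nat set \<Rightarrow> nat \<Rightarrow> (nat \<Rightarrow> nat list) \<Rightarrow> nat \<Rightarrow> nat \<Rightarrow> nat \<Rightarrow> (nat \<times> nat list) set" where
  "subst_gsm P h z h' q a =
     (if a \<in> P then (if q \<le> 1 then {(1, z a)} else if q \<le> 3 then {(3, rev (z a))} else {})
      else if a = h \<and> q = 1 then {(2, [h'])} else {})"

lemma is_gsm_subst_gsm: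
  assumes "finite P" "finite A'" "\<forall>a\<in>P. set (z a) \<subseteq> A'"
  shows "is_gsm {0, 1, 2, 3} (insert h P) (insert h' A') (subst_gsm P h z h') 0 {3}"
  using assms unfolding is_gsm_def subst_gsm_def by (auto simp: subset_iff)

lemma subst_gsm_run_right:
  assumes "gsm_run (subst_gsm P h z h') q v q' y" "q \<in> {2, 3}"
  shows "set v \<subseteq> P \<and> y = concat (map (\<lambda>a. rev (z a)) v) \<and> q' = (if v = [] then q else 3)"
  using assms by (induction rule: gsm_run.induct) (auto simp: subst_gsm_def split: if_splits)

lemma subst_gsm_run_left:
  assumes "gsm_run (subst_gsm P h z h') q x 3 y" "q \<le> 1" "h \<notin> P"
  shows "\<exists>u v. x = u @ h # v \<and> (q = 1 \<or> u \<noteq> []) \<and> v \<noteq> [] \<and> set u \<subseteq> P \<and> set v \<subseteq> P \<and>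
    y = concat (map z u) @ h' # concat (map (\<lambda>a. rev (z a)) v)"
  using assms
proof (induction q x "3::nat" y rule: gsm_run.induct)
  case (run_cons p zz q a w y)
  show ?case
  proof (cases "a \<in> P")
    case True
    then have "p = 1" "zz = z a" using run_cons.hyps(1) run_cons.prems by (auto simp: subst_gsm_def)
    then obtain u v where "w = u @ h # v" "v \<noteq> []" "set u \<subseteq> P" "set v \<subseteq> P"
      "y = concat (map z u) @ h' # concat (map (\<lambda>a. rev (z a)) v)"
      using run_cons.hyps(3) run_cons.prems by auto
    then show ?thesis using True \<open>zz = z a\<close> by (intro exI[of _ "a # u"] exI[of _ v]) simp
  next
    case False
    then have "a = h" "q = 1" "p = 2" "zz = [h']"
      using run_cons.hyps(1) run_cons.prems by (auto simp: subst_gsm_def split: if_splits)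
    then show ?thesis
      using subst_gsm_run_right[OF run_cons.hyps(2)] by (intro exI[of _ "[]"] exI[of _ w]) auto
  qed
qed simp

lemma subst_gsm_run_rightI:
  assumes "set v \<subseteq> P" "q \<in> {2, 3}"
  shows "gsm_run (subst_gsm P h z h') q v (if v = [] then q else 3) (concat (map (\<lambda>a. rev (z a)) v))"
  using assms
proof (induction v arbitrary: q)
  case (Cons a v)
  have "(3, rev (z a)) \<in> subst_gsm P h z h' q a" using Cons.prems by (auto simp: subst_gsm_def)
  moreover have "gsm_run (subst_gsm P h z h') 3 v 3 (concat (map (\<lambda>a. rev (z a)) v))"
    using Cons.IH[of 3] Cons.prems by (auto split: if_splits)
  ultimately show ?case using run_cons by fastforce
qed (simp add: run_nil)

lemma subst_gsm_run_leftI: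
  assumes "set u \<subseteq> P" "q \<le> 1" "q = 1 \<or> u \<noteq> []" "h \<notin> P" "v \<noteq> []" "set v \<subseteq> P"
  shows "gsm_run (subst_gsm P h z h') q (u @ h # v) 3
    (concat (map z u) @ h' # concat (map (\<lambda>a. rev (z a)) v))"
  using assms(1-3)
proof (induction u arbitrary: q)
  case Nil
  have "(2, [h']) \<in> subst_gsm P h z h' q h" using Nil.prems assms(4) by (auto simp: subst_gsm_def)
  moreover have "gsm_run (subst_gsm P h z h') 2 v 3 (concat (map (\<lambda>a. rev (z a)) v))"
    using subst_gsm_run_rightI[OF assms(6), of 2] assms(5) by simp
  ultimately show ?case using run_cons by fastforce
next
  case (Cons a u)
  have "(1, z a) \<in> subst_gsm P h z h' q a" using Cons.prems by (auto simp: subst_gsm_def)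
  then show ?case using run_cons[OF _ Cons.IH[of 1]] Cons.prems by fastforce
qed

lemma gsm_inverse_subst_word_problem:
  assumes "semigroup_on S m" "h \<notin> P" "h' \<notin> A'" "\<forall>a\<in>P. z a \<noteq> [] \<and> set (z a) \<subseteq> A'"
    "e ` A' \<subseteq> S"
  shows "gsm_inverse (insert h P) (subst_gsm P h z h') 0 {3} (word_problem m A' e h') =
    word_problem m P (\<lambda>a. word_val m e (z a)) h"
proof -
  let ?Z = "\<lambda>u. concat (map z u)"
  have rev_Z: "concat (map (\<lambda>a. rev (z a)) (rev v)) = rev (?Z v)" for v
    by (simp add: rev_concat rev_map comp_def)
  have run_iff: "gsm_run (subst_gsm P h z h') 0 x 3 y \<longleftrightarrow>
    (\<exists>u v. x = u @ [h] @ rev v \<and> u \<noteq> [] \<and> v \<noteq> [] \<and> set u \<subseteq> P \<and> set v \<subseteq> P \<and>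
       y = ?Z u @ [h'] @ rev (?Z v))" for x y
  proof
    assume "gsm_run (subst_gsm P h z h') 0 x 3 y"
    then obtain u v where "x = u @ h # v" "u \<noteq> []" "v \<noteq> []" "set u \<subseteq> P" "set v \<subseteq> P"
      "y = ?Z u @ h' # concat (map (\<lambda>a. rev (z a)) v)"
      using subst_gsm_run_left[OF _ _ assms(2)] by fastforce
    then show "\<exists>u v. x = u @ [h] @ rev v \<and> u \<noteq> [] \<and> v \<noteq> [] \<and> set u \<subseteq> P \<and> set v \<subseteq> P \<and>
       y = ?Z u @ [h'] @ rev (?Z v)"
      using rev_Z[of "rev v"] by (intro exI[of _ u] exI[of _ "rev v"]) simp
  next
    assume "\<exists>u v. x = u @ [h] @ rev v \<and> u \<noteq> [] \<and> v \<noteq> [] \<and> set u \<subseteq> P \<and> set v \<subseteq> P \<and>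
       y = ?Z u @ [h'] @ rev (?Z v)"
    then obtain u v where "x = u @ [h] @ rev v" "u \<noteq> []" "v \<noteq> []" "set u \<subseteq> P" "set v \<subseteq> P"
      "y = ?Z u @ [h'] @ rev (?Z v)" by blast
    then show "gsm_run (subst_gsm P h z h') 0 x 3 y"
      using subst_gsm_run_leftI[of u P 0 h "rev v" z h'] assms(2) rev_Z[of v] by simp
  qed
  have Z_word: "?Z u \<noteq> [] \<and> set (?Z u) \<subseteq> A'" if "u \<noteq> []" "set u \<subseteq> P" for u
    using that assms(4) by (cases u) auto
  have Z_val: "word_val m e (?Z u) = word_val m (\<lambda>a. word_val m e (z a)) u"
    if "u \<noteq> []" "set u \<subseteq> P" for u
    using word_val_concat[OF assms(1) that(1)] that(2) assms(4,5) by (meson image_mono order_trans subsetD)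
  have wp_iff: "?Z u @ [h'] @ rev (?Z v) \<in> word_problem m A' e h' \<longleftrightarrow>
    word_val m (\<lambda>a. word_val m e (z a)) u = word_val m (\<lambda>a. word_val m e (z a)) v"
    if "u \<noteq> []" "v \<noteq> []" "set u \<subseteq> P" "set v \<subseteq> P" for u v
    using word_problem_mem_iff[of h' "?Z u" "?Z v" m A' e] Z_word[OF that(1,3)] Z_word[OF that(2,4)]
      Z_val[OF that(1,3)] Z_val[OF that(2,4)] assms(3) by auto
  show ?thesis
  proof (intro set_eqI iffI)
    fix x assume "x \<in> gsm_inverse (insert h P) (subst_gsm P h z h') 0 {3} (word_problem m A' e h')"
    then obtain y where run: "gsm_run (subst_gsm P h z h') 0 x 3 y" and y: "y \<in> word_problem m A' e h'"
      unfolding gsm_inverse_def by auto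
    obtain u v where uv: "x = u @ [h] @ rev v" "u \<noteq> []" "v \<noteq> []" "set u \<subseteq> P" "set v \<subseteq> P"
      "y = ?Z u @ [h'] @ rev (?Z v)"
      using run_iff[THEN iffD1, OF run] by blast
    note wp = y[unfolded uv(6)]
    have "h \<notin> set u" "h \<notin> set v" using uv(4,5) assms(2) by auto
    then show "x \<in> word_problem m P (\<lambda>a. word_val m e (z a)) h"
      unfolding uv(1) using word_problem_mem_iff[of h u v m P "\<lambda>a. word_val m e (z a)"]
        wp wp_iff[OF uv(2-5)] uv(2-5) by simp
  next
    fix x assume "x \<in> word_problem m P (\<lambda>a. word_val m e (z a)) h"
    then obtain u v where uv: "x = u @ [h] @ rev v" "u \<noteq> []" "v \<noteq> []" "set u \<subseteq> P" "set v \<subseteq> P"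
      "word_val m (\<lambda>a. word_val m e (z a)) u = word_val m (\<lambda>a. word_val m e (z a)) v"
      unfolding word_problem_def by blast
    then have "gsm_run (subst_gsm P h z h') 0 x 3 (?Z u @ [h'] @ rev (?Z v))"
      by (intro run_iff[THEN iffD2] exI[of _ u] exI[of _ v]) simp
    moreover have "?Z u @ [h'] @ rev (?Z v) \<in> word_problem m A' e h'"
      using uv(6) wp_iff[OF uv(2-5)] by simp
    moreover have "set x \<subseteq> insert h P" using uv by auto
    ultimately show "x \<in> gsm_inverse (insert h P) (subst_gsm P h z h') 0 {3} (word_problem m A' e h')"
      unfolding gsm_inverse_def by blast
  qed
qed

lemma fin_gen_if_U_class: "U_class Cl S m \<Longrightarrow> fin_gen S m"
  unfolding U_class_def fin_gen_def by (blast intro: finite_imageI)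

lemma word_problem_in_class_if_U_class:
  assumes "closed_inverse_gsm Cl" "U_class Cl T m" "finite P" "h \<notin> P" "f ` P \<subseteq> T"
  shows "word_problem m P f h \<in> Cl"
proof -
  obtain A e h' where sg: "semigroup_on T m" and A: "finite A" "h' \<notin> A" "e ` A \<subseteq> T"
    "sgp_gen T m (e ` A) = T" "word_problem m A e h' \<in> Cl"
    using assms(2) unfolding U_class_def by blast
  have "\<exists>w. w \<noteq> [] \<and> set w \<subseteq> A \<and> word_val m e w = f a" if "a \<in> P" for a
    using generated_word_exists[OF sg A(3,4)] that assms(5) by (simp add: image_subset_iff)
  then obtain z where z: "\<And>a. a \<in> P \<Longrightarrow> z a \<noteq> [] \<and> set (z a) \<subseteq> A \<and> word_val m e (z a) = f a"
    by metis
  have "gsm_inverse (insert h P) (subst_gsm P h z h') 0 {3} (word_problem m A e h') \<in> Cl"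
    using assms(1) A(5) is_gsm_subst_gsm[OF assms(3) A(1), of z h h'] z
    unfolding closed_inverse_gsm_def by blast
  also have "gsm_inverse (insert h P) (subst_gsm P h z h') 0 {3} (word_problem m A e h') =
      word_problem m P (\<lambda>a. word_val m e (z a)) h"
    using z by (intro gsm_inverse_subst_word_problem[OF sg assms(4) A(2) _ A(3)]) simp
  also have "\<dots> = word_problem m P f h"
    using z by (intro word_problem_cong) simp
  finally show ?thesis .
qed

lemma Inf_fin_eq_iff:
  fixes L :: "'y::semilattice_inf set"
  assumes "finite L" "L \<noteq> {}"
  shows "Inf_fin L = \<alpha> \<longleftrightarrow> (\<forall>l\<in>L. \<alpha> \<le> l) \<and> (\<forall>\<beta>. \<alpha> < \<beta> \<longrightarrow> (\<exists>l\<in>L. \<not> \<beta> \<le> l))"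
proof
  assume eq: "Inf_fin L = \<alpha>"
  have "\<exists>l\<in>L. \<not> \<beta> \<le> l" if "\<alpha> < \<beta>" for \<beta>
  proof (rule ccontr)
    assume "\<not> (\<exists>l\<in>L. \<not> \<beta> \<le> l)"
    then have "\<beta> \<le> \<alpha>" using Inf_fin.bounded_iff[OF assms] eq by blast
    then show False using that by simp
  qed
  then show "(\<forall>l\<in>L. \<alpha> \<le> l) \<and> (\<forall>\<beta>. \<alpha> < \<beta> \<longrightarrow> (\<exists>l\<in>L. \<not> \<beta> \<le> l))"
    using eq Inf_fin.coboundedI[OF assms(1)] by blast
next
  assume lower: "(\<forall>l\<in>L. \<alpha> \<le> l) \<and> (\<forall>\<beta>. \<alpha> < \<beta> \<longrightarrow> (\<exists>l\<in>L. \<not> \<beta> \<le> l))"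
  then have "\<alpha> \<le> Inf_fin L" using Inf_fin.bounded_iff[OF assms] by blast
  moreover have "\<not> \<alpha> < Inf_fin L"
    using lower Inf_fin.coboundedI[OF assms(1)] by blast
  ultimately show "Inf_fin L = \<alpha>" by (simp add: order.order_iff_strict)
qed

locale strong_semilattice_of_semigroups =
  fixes Cs :: "'y::semilattice_inf \<Rightarrow> 'a set" and M :: "'y \<Rightarrow> 'a \<Rightarrow> 'a \<Rightarrow> 'a"
    and phi :: "'y \<Rightarrow> 'y \<Rightarrow> 'a \<Rightarrow> 'a"
  assumes strong_semilattice: "strong_semilattice Cs M phi"
begin

abbreviation S :: "('y \<times> 'a) set" where "S \<equiv> ssl_carrier Cs"
abbreviation mult :: "'y \<times> 'a \<Rightarrow> 'y \<times> 'a \<Rightarrow> 'y \<times> 'a" where "mult \<equiv> ssl_mult M phi"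

lemma component_nonempty: "Cs \<alpha> \<noteq> {}"
  and component_semigroup: "semigroup_on (Cs \<alpha>) (M \<alpha>)"
  using strong_semilattice by (auto simp: strong_semilattice_def)

lemma M_closed: "x \<in> Cs \<alpha> \<Longrightarrow> y \<in> Cs \<alpha> \<Longrightarrow> M \<alpha> x y \<in> Cs \<alpha>"
  using component_semigroup by (auto simp: semigroup_on_def)

lemma M_assoc: "x \<in> Cs \<alpha> \<Longrightarrow> y \<in> Cs \<alpha> \<Longrightarrow> z \<in> Cs \<alpha> \<Longrightarrow> M \<alpha> (M \<alpha> x y) z = M \<alpha> x (M \<alpha> y z)"
  using component_semigroup by (auto simp: semigroup_on_def)

lemma phi_closed: "\<beta> \<le> \<alpha> \<Longrightarrow> x \<in> Cs \<alpha> \<Longrightarrow> phi \<alpha> \<beta> x \<in> Cs \<beta>"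
  using strong_semilattice by (auto simp: strong_semilattice_def)

lemma phi_M: "\<beta> \<le> \<alpha> \<Longrightarrow> x \<in> Cs \<alpha> \<Longrightarrow> y \<in> Cs \<alpha> \<Longrightarrow> phi \<alpha> \<beta> (M \<alpha> x y) = M \<beta> (phi \<alpha> \<beta> x) (phi \<alpha> \<beta> y)"
  using strong_semilattice by (auto simp: strong_semilattice_def)

lemma phi_self: "x \<in> Cs \<alpha> \<Longrightarrow> phi \<alpha> \<alpha> x = x"
  using strong_semilattice by (auto simp: strong_semilattice_def)

lemma phi_phi: "\<beta> \<le> \<alpha> \<Longrightarrow> \<gamma> \<le> \<beta> \<Longrightarrow> x \<in> Cs \<alpha> \<Longrightarrow> phi \<beta> \<gamma> (phi \<alpha> \<beta> x) = phi \<alpha> \<gamma> x"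
  using strong_semilattice by (auto simp: strong_semilattice_def)

lemma mem_S_iff: "p \<in> S \<longleftrightarrow> snd p \<in> Cs (fst p)"
  by (cases p) (simp add: ssl_carrier_def)

definition proj :: "'y \<Rightarrow> 'y \<times> 'a \<Rightarrow> 'a" where
  "proj \<beta> p = phi (fst p) \<beta> (snd p)"

lemma proj_closed: "p \<in> S \<Longrightarrow> \<beta> \<le> fst p \<Longrightarrow> proj \<beta> p \<in> Cs \<beta>"
  by (simp add: proj_def mem_S_iff phi_closed)

lemma proj_self: "p \<in> S \<Longrightarrow> proj (fst p) p = snd p"
  by (simp add: proj_def mem_S_iff phi_self)

lemma mult_eq: "mult p q = (let \<gamma> = inf (fst p) (fst q) in (\<gamma>, M \<gamma> (proj \<gamma> p) (proj \<gamma> q)))"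
  by (simp add: ssl_mult_def proj_def Let_def)

lemma fst_mult: "fst (mult p q) = inf (fst p) (fst q)"
  by (simp add: mult_eq Let_def)

lemma mult_closed: "p \<in> S \<Longrightarrow> q \<in> S \<Longrightarrow> mult p q \<in> S"
  by (simp add: mult_eq Let_def mem_S_iff M_closed proj_closed)

lemma proj_mult:
  assumes "p \<in> S" "q \<in> S" "\<beta> \<le> fst p" "\<beta> \<le> fst q"
  shows "proj \<beta> (mult p q) = M \<beta> (proj \<beta> p) (proj \<beta> q)"
proof -
  let ?\<gamma> = "inf (fst p) (fst q)"
  have "proj \<beta> (mult p q) = phi ?\<gamma> \<beta> (M ?\<gamma> (proj ?\<gamma> p) (proj ?\<gamma> q))"
    by (simp add: proj_def mult_eq Let_def)
  also have "\<dots> = M \<beta> (phi ?\<gamma> \<beta> (proj ?\<gamma> p)) (phi ?\<gamma> \<beta> (proj ?\<gamma> q))"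
    using assms by (intro phi_M proj_closed) auto
  also have "\<dots> = M \<beta> (proj \<beta> p) (proj \<beta> q)"
    using assms by (simp add: proj_def mem_S_iff phi_phi)
  finally show ?thesis .
qed

lemma ssl_semigroup: "semigroup_on S mult"
  unfolding semigroup_on_def
proof (intro conjI ballI)
  fix p q r assume pqr: "p \<in> S" "q \<in> S" "r \<in> S"
  let ?\<gamma> = "inf (inf (fst p) (fst q)) (fst r)"
  have "snd (mult (mult p q) r) = M ?\<gamma> (M ?\<gamma> (proj ?\<gamma> p) (proj ?\<gamma> q)) (proj ?\<gamma> r)"
    using pqr by (simp add: mult_eq[of "mult p q" r] Let_def fst_mult proj_mult le_infI1 le_infI2)
  also have "\<dots> = M ?\<gamma> (proj ?\<gamma> p) (M ?\<gamma> (proj ?\<gamma> q) (proj ?\<gamma> r))"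
    using pqr by (intro M_assoc proj_closed) (auto intro: le_infI1 le_infI2)
  also have "\<dots> = snd (mult p (mult q r))"
    using pqr by (simp add: mult_eq[of p "mult q r"] Let_def fst_mult proj_mult inf_assoc le_infI1 le_infI2)
  finally show "mult (mult p q) r = mult p (mult q r)"
    by (simp add: prod_eq_iff fst_mult inf_assoc)
qed (rule mult_closed)

lemma mult_same_component: "x \<in> Cs \<alpha> \<Longrightarrow> y \<in> Cs \<alpha> \<Longrightarrow> mult (\<alpha>, x) (\<alpha>, y) = (\<alpha>, M \<alpha> x y)"
  by (simp add: mult_eq proj_def phi_self)

lemma fst_word_val: "u \<noteq> [] \<Longrightarrow> fst (word_val mult e u) = Inf_fin (fst ` e ` set u)"
  using word_val_hom[of UNIV mult fst inf u e] word_val_inf[of u "\<lambda>a. fst (e a)"]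
  by (simp add: fst_mult image_image)

lemma fst_word_val_eq_iff:
  "u \<noteq> [] \<Longrightarrow> fst (word_val mult e u) = \<alpha> \<longleftrightarrow>
    (\<forall>a\<in>set u. \<alpha> \<le> fst (e a)) \<and> (\<forall>\<beta>. \<alpha> < \<beta> \<longrightarrow> (\<exists>a\<in>set u. \<not> \<beta> \<le> fst (e a)))"
  by (simp add: fst_word_val Inf_fin_eq_iff)

lemma proj_word_val:
  assumes "u \<noteq> []" "e ` set u \<subseteq> S" "\<beta> \<le> fst (word_val mult e u)"
  shows "proj \<beta> (word_val mult e u) = word_val (M \<beta>) (\<lambda>a. proj \<beta> (e a)) u"
proof (rule word_val_hom[where T = "{p \<in> S. \<beta> \<le> fst p}"])
  show "\<forall>p\<in>{p \<in> S. \<beta> \<le> fst p}. \<forall>q\<in>{p \<in> S. \<beta> \<le> fst p}.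
      mult p q \<in> {p \<in> S. \<beta> \<le> fst p} \<and> proj \<beta> (mult p q) = M \<beta> (proj \<beta> p) (proj \<beta> q)"
    by (simp add: mult_closed fst_mult proj_mult)
  show "e ` set u \<subseteq> {p \<in> S. \<beta> \<le> fst p}"
    using assms by (auto simp: fst_word_val Inf_fin.bounded_iff)
qed (rule assms(1))

lemma word_val_eq:
  assumes "u \<noteq> []" "e ` set u \<subseteq> S" "fst (word_val mult e u) = \<alpha>"
  shows "word_val mult e u = (\<alpha>, word_val (M \<alpha>) (\<lambda>a. proj \<alpha> (e a)) u)"
proof -
  have "word_val mult e u \<in> S"
    using word_val_closed[of S mult] mult_closed assms(1,2) by blast
  then have "snd (word_val mult e u) = proj \<alpha> (word_val mult e u)"
    using proj_self assms(3) by metis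
  also have "\<dots> = word_val (M \<alpha>) (\<lambda>a. proj \<alpha> (e a)) u"
    using proj_word_val assms by simp
  finally show ?thesis using assms(3) by (simp add: prod_eq_iff)
qed

lemma component_generated:
  fixes A :: "nat set"
  assumes "e ` A \<subseteq> S" "sgp_gen S mult (e ` A) = S"
  shows "sgp_gen (Cs \<alpha>) (M \<alpha>) ((\<lambda>a. proj \<alpha> (e a)) ` {a\<in>A. \<alpha> \<le> fst (e a)}) = Cs \<alpha>"
proof -
  let ?P = "{a\<in>A. \<alpha> \<le> fst (e a)}" and ?f = "\<lambda>a. proj \<alpha> (e a)"
  have f: "?f ` ?P \<subseteq> Cs \<alpha>" using assms(1) by (auto intro: proj_closed)
  have "{word_val (M \<alpha>) ?f w | w. w \<noteq> [] \<and> set w \<subseteq> ?P} = Cs \<alpha>"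
  proof (intro equalityI subsetI)
    fix x assume "x \<in> {word_val (M \<alpha>) ?f w | w. w \<noteq> [] \<and> set w \<subseteq> ?P}"
    then obtain w where "x = word_val (M \<alpha>) ?f w" "w \<noteq> []" "set w \<subseteq> ?P" by blast
    then show "x \<in> Cs \<alpha>"
      using word_val_closed[of "Cs \<alpha>" "M \<alpha>" w ?f] f M_closed by blast
  next
    fix x assume "x \<in> Cs \<alpha>"
    then obtain u where u: "u \<noteq> []" "set u \<subseteq> A" "word_val mult e u = (\<alpha>, x)"
      using generated_word_exists[OF ssl_semigroup assms] by (metis mem_S_iff fst_conv snd_conv)
    have eu: "e ` set u \<subseteq> S" using u(2) assms(1) by blast
    have "set u \<subseteq> ?P" using u fst_word_val_eq_iff[OF u(1), of e \<alpha>] by auto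
    moreover have "x = word_val (M \<alpha>) ?f u" using word_val_eq[OF u(1) eu] u(3) by simp
    ultimately show "x \<in> {word_val (M \<alpha>) ?f w | w. w \<noteq> [] \<and> set w \<subseteq> ?P}"
      using u(1) by blast
  qed
  then show ?thesis using sgp_gen_eq_word_vals[OF component_semigroup f] by simp
qed

lemma U_class_component:
  assumes "closed_inverse_gsm Cl" "U_class Cl S mult"
  shows "U_class Cl (Cs \<alpha>) (M \<alpha>)"
proof -
  obtain A :: "nat set" and e where A: "finite A" "e ` A \<subseteq> S" "sgp_gen S mult (e ` A) = S"
    using assms(2) unfolding U_class_def by blast
  define B where "B = (\<lambda>a. proj \<alpha> (e a)) ` {a\<in>A. \<alpha> \<le> fst (e a)}"
  have B: "finite B" "B \<subseteq> Cs \<alpha>" "sgp_gen (Cs \<alpha>) (M \<alpha>) B = Cs \<alpha>"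
    unfolding B_def using A component_generated by (auto intro: proj_closed)
  obtain g where g: "bij_betw g {0..<card B} B" using ex_bij_betw_nat_finite[OF B(1)] by blast
  then have gB: "g ` {0..<card B} = B" "inj_on g {0..<card B}" by (auto simp: bij_betw_def)
  have gC: "g b \<in> Cs \<alpha>" if "b < card B" for b using gB(1) B(2) that by auto
  have "word_problem mult {0..<card B} (\<lambda>b. (\<alpha>, g b)) (card B) \<in> Cl"
    using gC by (intro word_problem_in_class_if_U_class[OF assms]) (auto simp: mem_S_iff)
  also have "word_problem mult {0..<card B} (\<lambda>b. (\<alpha>, g b)) (card B) =
      word_problem (M \<alpha>) {0..<card B} g (card B)"
    using gC by (intro word_problem_inj_hom[of "Cs \<alpha>" "M \<alpha>" "Pair \<alpha>" mult])
      (auto simp: M_closed mult_same_component inj_on_def)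
  finally show ?thesis
    unfolding U_class_def using component_semigroup gB B
    by (intro conjI exI[of _ "{0..<card B}"] exI[of _ g] exI[of _ "card B"]) auto
qed

lemma finite_levels:
  fixes A :: "nat set"
  assumes "finite A" "e ` A \<subseteq> S" "sgp_gen S mult (e ` A) = S"
  shows "finite (UNIV :: 'y set)"
proof -
  have "\<alpha> \<in> (\<lambda>T. Inf_fin (fst ` e ` T)) ` Pow A" for \<alpha>
  proof -
    obtain x where "x \<in> Cs \<alpha>" using component_nonempty by blast
    then obtain u where u: "u \<noteq> []" "set u \<subseteq> A" "word_val mult e u = (\<alpha>, x)"
      using generated_word_exists[OF ssl_semigroup assms(2,3)] by (metis mem_S_iff fst_conv snd_conv)
    then have "\<alpha> = Inf_fin (fst ` e ` set u)" using fst_word_val by (metis fst_conv)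
    then show ?thesis using u(2) by blast
  qed
  then have "UNIV \<subseteq> (\<lambda>T. Inf_fin (fst ` e ` T)) ` Pow A" by blast
  then show ?thesis by (rule finite_subset) (simp add: assms(1))
qed

lemma word_val_eq_iff:
  assumes "u \<noteq> []" "v \<noteq> []" "e ` set u \<subseteq> S" "e ` set v \<subseteq> S"
  shows "word_val mult e u = word_val mult e v \<longleftrightarrow>
    (\<exists>\<alpha>. fst (word_val mult e u) = \<alpha> \<and> fst (word_val mult e v) = \<alpha> \<and>
       word_val (M \<alpha>) (\<lambda>a. proj \<alpha> (e a)) u = word_val (M \<alpha>) (\<lambda>a. proj \<alpha> (e a)) v)"
  using word_val_eq[OF assms(1,3)] word_val_eq[OF assms(2,4)] by (metis prod.inject)

lemma word_problem_decomposition: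
  assumes "e ` A \<subseteq> S" "h \<notin> A"
  shows "word_problem mult A e h =
    (\<Union>\<alpha>. word_problem (M \<alpha>) {a\<in>A. \<alpha> \<le> fst (e a)} (\<lambda>a. proj \<alpha> (e a)) h \<inter>
      (\<Inter>\<beta>\<in>{\<beta>. \<alpha> < \<beta>}. both_sides_meet A h {a\<in>A. \<not> \<beta> \<le> fst (e a)}))"
    (is "_ = (\<Union>\<alpha>. ?K \<alpha> \<inter> (\<Inter>\<beta>\<in>{\<beta>. \<alpha> < \<beta>}. ?R \<beta>))")
proof (intro set_eqI)
  fix x
  show "x \<in> word_problem mult A e h \<longleftrightarrow> x \<in> (\<Union>\<alpha>. ?K \<alpha> \<inter> (\<Inter>\<beta>\<in>{\<beta>. \<alpha> < \<beta>}. ?R \<beta>))"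
  proof (cases "\<exists>u v. x = u @ [h] @ rev v \<and> set u \<subseteq> A \<and> set v \<subseteq> A")
    case True
    then obtain u v where x: "x = u @ [h] @ rev v" and uv: "set u \<subseteq> A" "set v \<subseteq> A" by blast
    have h: "h \<notin> set u" "h \<notin> set v" "h \<notin> set (rev v)" using uv assms(2) by auto
    have e: "e ` set u \<subseteq> S" "e ` set v \<subseteq> S" using uv assms(1) by auto
    have "x \<in> word_problem mult A e h \<longleftrightarrow>
        u \<noteq> [] \<and> v \<noteq> [] \<and> word_val mult e u = word_val mult e v"
      unfolding x word_problem_mem_iff[OF h(1,2)] using uv by simp
    also have "\<dots> \<longleftrightarrow> (\<exists>\<alpha>. u \<noteq> [] \<and> v \<noteq> [] \<and>
        fst (word_val mult e u) = \<alpha> \<and> fst (word_val mult e v) = \<alpha> \<and>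
        word_val (M \<alpha>) (\<lambda>a. proj \<alpha> (e a)) u = word_val (M \<alpha>) (\<lambda>a. proj \<alpha> (e a)) v)"
      using word_val_eq_iff[OF _ _ e] by blast
    also have "\<dots> \<longleftrightarrow> (\<exists>\<alpha>. x \<in> ?K \<alpha> \<and> (\<forall>\<beta>. \<alpha> < \<beta> \<longrightarrow> x \<in> ?R \<beta>))"
    proof (cases "u = [] \<or> v = []")
      case True
      then show ?thesis unfolding x word_problem_mem_iff[OF h(1,2)] by auto
    next
      case False
      have level: "fst (word_val mult e w) = \<alpha> \<longleftrightarrow> set w \<subseteq> {a\<in>A. \<alpha> \<le> fst (e a)} \<and>
          (\<forall>\<beta>. \<alpha> < \<beta> \<longrightarrow> set w \<inter> {a\<in>A. \<not> \<beta> \<le> fst (e a)} \<noteq> {})"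
        if "w \<noteq> []" "set w \<subseteq> A" for w \<alpha>
        unfolding fst_word_val_eq_iff[OF that(1)] using that(2) by blast
      have ne: "u \<noteq> []" "v \<noteq> []" using False by auto
      show ?thesis
        unfolding x word_problem_mem_iff[OF h(1,2)] both_sides_meet_mem_iff[OF h(1,3)]
          level[OF ne(1) uv(1)] level[OF ne(2) uv(2)] using uv ne by auto
    qed
    also have "\<dots> \<longleftrightarrow> x \<in> (\<Union>\<alpha>. ?K \<alpha> \<inter> (\<Inter>\<beta>\<in>{\<beta>. \<alpha> < \<beta>}. ?R \<beta>))" by blast
    finally show ?thesis .
  next
    case False
    have "x \<notin> word_problem mult A e h" using False unfolding word_problem_def by blast
    moreover have "x \<notin> ?K \<alpha>" for \<alpha> using False unfolding word_problem_def by blast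
    ultimately show ?thesis by blast
  qed
qed

lemma U_class_if_components:
  assumes "closed_finite_union Cl" "closed_inverse_gsm Cl" "closed_inter_regular Cl"
    and "fin_gen S mult" "\<forall>\<alpha>. U_class Cl (Cs \<alpha>) (M \<alpha>)"
  shows "U_class Cl S mult"
proof -
  obtain X where X: "finite X" "X \<subseteq> S" "sgp_gen S mult X = S"
    using assms(4) unfolding fin_gen_def by blast
  obtain e where "bij_betw e {0..<card X} X" using ex_bij_betw_nat_finite[OF X(1)] by blast
  then have e: "e ` {0..<card X} = X" "inj_on e {0..<card X}" by (auto simp: bij_betw_def)
  let ?A = "{0..<card X}" and ?h = "card X"
  have eS: "e ` ?A \<subseteq> S" using e X(2) by simp
  have finite_Y: "finite (UNIV :: 'y set)" using finite_levels[of ?A e] e X by simp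
  have "word_problem (M \<alpha>) {a\<in>?A. \<alpha> \<le> fst (e a)} (\<lambda>a. proj \<alpha> (e a)) ?h \<in> Cl" for \<alpha>
    using assms(5) eS by (intro word_problem_in_class_if_U_class[OF assms(2)]) (auto intro!: proj_closed)
  then have "word_problem (M \<alpha>) {a\<in>?A. \<alpha> \<le> fst (e a)} (\<lambda>a. proj \<alpha> (e a)) ?h \<inter>
      (\<Inter>\<beta>\<in>{\<beta>. \<alpha> < \<beta>}. both_sides_meet ?A ?h {a\<in>?A. \<not> \<beta> \<le> fst (e a)}) \<in> Cl" for \<alpha>
    using finite_Y regular_both_sides_meet[of ?A ?h]
    by (intro closed_inter_regular_INT[OF assms(3)]) (auto intro: finite_subset)
  then have "word_problem mult ?A e ?h \<in> Cl"
    unfolding word_problem_decomposition[OF eS, of ?h, simplified]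
    using finite_Y by (intro closed_finite_union_UN[OF assms(1)]) auto
  then show ?thesis
    unfolding U_class_def using ssl_semigroup e X
    by (intro conjI exI[of _ ?A] exI[of _ e] exI[of _ ?h]) auto
qed

end

theorem mainTheorem11:
  fixes Cl :: "nat list set set"
    and Cs :: "'y::semilattice_inf \<Rightarrow> 'a set"
    and M :: "'y \<Rightarrow> 'a \<Rightarrow> 'a \<Rightarrow> 'a"
    and phi :: "'y \<Rightarrow> 'y \<Rightarrow> 'a \<Rightarrow> 'a"
  assumes "closed_finite_union Cl"
    and "closed_inverse_gsm Cl"
    and "closed_inter_regular Cl"
    and "strong_semilattice Cs M phi"
  shows "U_class Cl (ssl_carrier Cs) (ssl_mult M phi) \<longleftrightarrow>
           fin_gen (ssl_carrier Cs) (ssl_mult M phi) \<and> (\<forall>\<alpha>. U_class Cl (Cs \<alpha>) (M \<alpha>))"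
proof -
  interpret strong_semilattice_of_semigroups Cs M phi
    by unfold_locales (fact assms(4))
  show ?thesis
    using fin_gen_if_U_class U_class_component[OF assms(2)] U_class_if_components[OF assms(1-3)]
    by blast
qed

end
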